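(* Let $\mathcal X$ be a countable space with the discrete metric and $\mathcal Y$ a Polish space. If a sequence $\{\mu_n\}_{n\in\mathbb N}$ of probability measures on $\mathcal X\times\mathcal Y$ converges to a probability measure $\mu$ in total variation norm, i.e. $\|\mu_n-\mu\|_{TV}\to0$ where $\|\nu\|_{TV}=\sup\{\int f\,d\nu: f:\mathcal X\times\mathcal Y\to[-1,1]\text{ Borel}\}$, then $\mu_n\to\mu$ in $\wp_I(\mathcal X\times\mathcal Y)$.
   Context: For a Polish space $\mathcal S$, $\wp(\mathcal S)$ denotes the Borel probability measures and $\wp_w(\mathcal S)$ this set with the weak-* topology (weakest topology making $\mu\mapsto\int g\,d\mu$ continuous for all bounded continuous $g$). For $\mu\in\wp(\mathcal X\times\mathcal Y)$, $\mu^{\mathcal X}$ is the marginal and $\mu(\cdot\mid x)$ a regular conditional distribution on $\mathcal Y$ given $x$. Let $\psi(\mu)\in\wp(\mathcal X\times\wp_w(\mathcal Y))$ be $\psi(\mu)(dx,d\zeta)=\delta_{\mu(\cdot\mid x)}(d\zeta)\mu^{\mathcal X}(dx)$. The topology of information on $\wp(\mathcal X\times\mathcal Y)$ is the coarsest topology making $\psi$ continuous into $\wp_w(\mathcal X\times\wp_w(\mathcal Y))$; $\wp_I(\mathcal X\times\mathcal Y)$ denotes $\wp(\mathcal X\times\mathcal Y)$ with it. *)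

theory Defs
  imports "HOL-Probability.Probability"
begin

definition borel_of :: "'a topology \<Rightarrow> 'a measure" where
  "borel_of T = sigma (topspace T) {U. openin T U}"

definition prob_measures :: "'b::topological_space measure set" where
  "prob_measures = {M. prob_space M \<and> sets M = sets (borel :: 'b measure)}"

definition weak_topology :: "'b::topological_space measure topology" where
  "weak_topology = topology_generated_by
     (insert prob_measures
       {{M \<in> prob_measures. (\<integral>y. g y \<partial>M) \<in> U} | g U.
          continuous_on UNIV g \<and> bounded (range g) \<and> open (U :: real set)})"

definition XY_space :: "('a::countable \<times> 'b::polish_space) measure" where
  "XY_space = count_space UNIV \<Otimes>\<^sub>M borel"

definition marginal :: "('a::countable \<times> 'b) measure \<Rightarrow> 'a measure" where
  "marginal \<mu> = distr \<mu> (count_space UNIV) fst"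

definition is_rcd :: "('a::countable \<times> 'b::polish_space) measure \<Rightarrow> ('a \<Rightarrow> 'b measure) \<Rightarrow> bool" where
  "is_rcd \<mu> \<kappa> \<longleftrightarrow> (\<forall>x. \<kappa> x \<in> prob_measures) \<and>
     (\<forall>A B. B \<in> sets borel \<longrightarrow>
        measure \<mu> (A \<times> B) = (\<integral>x. indicator A x * measure (\<kappa> x) B \<partial>marginal \<mu>))"

definition XP_topology :: "('a \<times> 'b::topological_space measure) topology" where
  "XP_topology = prod_topology (discrete_topology UNIV) weak_topology"

text \<open>psi(mu) = delta_{mu(.|x)}(d zeta) mu^X(dx), a measure on X \<times> P_w(Y).\<close>
definition psi :: "('a::countable \<times> 'b::polish_space) measure \<Rightarrow> ('a \<Rightarrow> 'b measure)
    \<Rightarrow> ('a \<times> 'b measure) measure" where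
  "psi \<mu> \<kappa> = distr (marginal \<mu>) (borel_of XP_topology) (\<lambda>x. (x, \<kappa> x))"

definition weak_conv :: "'c topology \<Rightarrow> (nat \<Rightarrow> 'c measure) \<Rightarrow> 'c measure \<Rightarrow> bool" where
  "weak_conv T Ms M \<longleftrightarrow> (\<forall>g. continuous_map T euclideanreal g \<and> bounded (g ` topspace T) \<longrightarrow>
      (\<lambda>n. \<integral>z. g z \<partial>Ms n) \<longlonglongrightarrow> (\<integral>z. g z \<partial>M))"

definition tv_dist :: "('a::countable \<times> 'b::polish_space) measure \<Rightarrow> ('a \<times> 'b) measure \<Rightarrow> real" where
  "tv_dist \<nu> \<mu> = (SUP f \<in> {f \<in> borel_measurable XY_space. \<forall>z. \<bar>f z\<bar> \<le> 1}.
      (\<integral>z. f z \<partial>\<nu>) - (\<integral>z. f z \<partial>\<mu>))"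

end

theory Submission
  imports Defs
begin

text \<open>
  For bounded continuous \<open>g\<close> on \<open>X \<times> P(Y)\<close>, integrating \<open>g\<close> against \<open>psi \<mu>\<close> means
  integrating \<open>x \<mapsto> g(x, \<mu>(\<cdot>|x))\<close> against the marginal of \<open>\<mu>\<close>. Total variation
  convergence controls integrals of bounded Borel functions uniformly, so replacing the marginal
  of \<open>\<mu>\<^sub>n\<close> by that of \<open>\<mu>\<close> costs at most \<open>sup |g| \<cdot> \<parallel>\<mu>\<^sub>n - \<mu>\<parallel>\<^sub>T\<^sub>V\<close>.
  At an atom \<open>x\<close> of positive mass, \<open>\<integral>h d\<mu>\<^sub>n(\<cdot>|x)\<close> is the integral of \<open>h(y)\<close> over
  \<open>{x} \<times> Y\<close> divided by the mass of \<open>x\<close>, and numerator and denominator both converge;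
  hence \<open>\<mu>\<^sub>n(\<cdot>|x) \<rightarrow> \<mu>(\<cdot>|x)\<close> weakly there, and dominated convergence over the
  countably many atoms of the marginal of \<open>\<mu>\<close> finishes the proof.
\<close>

lemma space_XY_space: "space (XY_space :: ('a::countable \<times> 'b::polish_space) measure) = UNIV"
  by (simp add: XY_space_def space_pair_measure)

lemma space_eq_UNIV_if_sets_XY_space:
  fixes M :: "('a::countable \<times> 'b::polish_space) measure"
  assumes "sets M = sets XY_space"
  shows "space M = UNIV"
  using sets_eq_imp_space_eq[OF assms] space_XY_space by simp

lemma measurable_cong_XY_space:
  fixes M :: "('a::countable \<times> 'b::polish_space) measure"
  assumes "sets M = sets XY_space"
  shows "measurable M N = measurable XY_space N"
  using assms by (intro measurable_cong_sets) auto

lemma slice_in_sets_XY_space: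
  "B \<in> sets borel \<Longrightarrow> {x} \<times> B \<in> sets (XY_space :: ('a::countable \<times> 'b::polish_space) measure)"
  unfolding XY_space_def by (rule pair_measureI) auto

lemma abs_integral_le_1_prob:
  assumes "prob_space M" "h \<in> borel_measurable M" "\<And>z. \<bar>h z\<bar> \<le> (1::real)"
  shows "\<bar>\<integral>z. h z \<partial>M\<bar> \<le> 1"
proof -
  interpret prob_space M by fact
  have int: "integrable M h" using assms by (intro integrable_const_bound[where B=1]) auto
  have "(\<integral>z. h z \<partial>M) \<le> 1" using assms by (intro integral_le_const int) (auto simp: abs_le_iff)
  moreover have "-1 \<le> (\<integral>z. h z \<partial>M)" using assms
    by (intro integral_ge_const int) (auto simp: abs_le_iff)
  ultimately show ?thesis by auto
qed

subsection \<open>Total variation\<close>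

lemma integral_diff_le_tv_dist:
  fixes M N :: "('a::countable \<times> 'b::polish_space) measure"
  assumes M: "prob_space M" "sets M = sets XY_space" and N: "prob_space N" "sets N = sets XY_space"
    and f: "f \<in> borel_measurable XY_space" "\<And>z. \<bar>f z\<bar> \<le> 1"
  shows "(\<integral>z. f z \<partial>M) - (\<integral>z. f z \<partial>N) \<le> tv_dist M N"
proof -
  define S where "S = {f \<in> (borel_measurable XY_space :: ('a \<times> 'b \<Rightarrow> real) set). \<forall>z. \<bar>f z\<bar> \<le> 1}"
  have "(\<integral>z. h z \<partial>M) - (\<integral>z. h z \<partial>N) \<le> 2" if "h \<in> S" for h
  proof -
    have "\<bar>\<integral>z. h z \<partial>M\<bar> \<le> 1" "\<bar>\<integral>z. h z \<partial>N\<bar> \<le> 1"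
      using that M N
      by (auto intro!: abs_integral_le_1_prob
          simp: S_def measurable_cong_XY_space[OF M(2)] measurable_cong_XY_space[OF N(2)])
    then show ?thesis by linarith
  qed
  then have "bdd_above ((\<lambda>h. (\<integral>z. h z \<partial>M) - (\<integral>z. h z \<partial>N)) ` S)"
    by (intro bdd_aboveI[where M=2]) auto
  moreover have "f \<in> S" using f by (simp add: S_def)
  ultimately show ?thesis
    unfolding tv_dist_def S_def[symmetric] by (rule cSUP_upper2) auto
qed

lemma abs_integral_diff_le_tv_dist:
  fixes M N :: "('a::countable \<times> 'b::polish_space) measure"
  assumes M: "prob_space M" "sets M = sets XY_space" and N: "prob_space N" "sets N = sets XY_space"
    and f: "f \<in> borel_measurable XY_space" "\<And>z. \<bar>f z\<bar> \<le> C" and C: "C > 0"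
  shows "\<bar>(\<integral>z. f z \<partial>M) - (\<integral>z. f z \<partial>N)\<bar> \<le> C * tv_dist M N"
proof -
  have "\<bar>f z / C\<bar> \<le> 1 \<and> \<bar>- f z / C\<bar> \<le> 1" for z
    using f(2)[of z] C by (simp add: abs_divide abs_of_pos)
  moreover have "(\<lambda>z. f z / C) \<in> borel_measurable XY_space" "(\<lambda>z. - f z / C) \<in> borel_measurable XY_space"
    using f(1) by simp_all
  ultimately have "(\<integral>z. f z / C \<partial>M) - (\<integral>z. f z / C \<partial>N) \<le> tv_dist M N"
    "(\<integral>z. - f z / C \<partial>M) - (\<integral>z. - f z / C \<partial>N) \<le> tv_dist M N"
    by (blast intro: integral_diff_le_tv_dist[OF M N])+
  then have "(\<integral>z. f z \<partial>M) / C - (\<integral>z. f z \<partial>N) / C \<le> tv_dist M N"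
    "- ((\<integral>z. f z \<partial>M) / C) + (\<integral>z. f z \<partial>N) / C \<le> tv_dist M N"
    by simp_all
  then show ?thesis using C by (auto simp: field_simps abs_le_iff)
qed

lemma tendsto_integral_diff_tv_dist:
  fixes Ms :: "nat \<Rightarrow> ('a::countable \<times> 'b::polish_space) measure"
    and f :: "nat \<Rightarrow> 'a \<times> 'b \<Rightarrow> real"
  assumes Ms: "\<And>n. prob_space (Ms n)" "\<And>n. sets (Ms n) = sets XY_space"
    and N: "prob_space N" "sets N = sets XY_space"
    and tv: "(\<lambda>n. tv_dist (Ms n) N) \<longlonglongrightarrow> 0"
    and f: "\<And>n. f n \<in> borel_measurable XY_space" "\<And>n z. \<bar>f n z\<bar> \<le> C"
  shows "(\<lambda>n. (\<integral>z. f n z \<partial>Ms n) - (\<integral>z. f n z \<partial>N)) \<longlonglongrightarrow> 0"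
proof (rule Lim_null_comparison)
  have "\<bar>f n z\<bar> \<le> max C 1" for n z using f(2)[of n z] by linarith
  from abs_integral_diff_le_tv_dist[OF Ms N f(1) this]
  show "\<forall>\<^sub>F n in sequentially.
      norm ((\<integral>z. f n z \<partial>Ms n) - (\<integral>z. f n z \<partial>N)) \<le> max C 1 * tv_dist (Ms n) N"
    by simp
  show "(\<lambda>n. max C 1 * tv_dist (Ms n) N) \<longlonglongrightarrow> 0"
    using tendsto_mult_right_zero[OF tv] by simp
qed

lemma tendsto_integral_tv_dist:
  fixes Ms :: "nat \<Rightarrow> ('a::countable \<times> 'b::polish_space) measure"
    and f :: "'a \<times> 'b \<Rightarrow> real"
  assumes Ms: "\<And>n. prob_space (Ms n)" "\<And>n. sets (Ms n) = sets XY_space"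
    and N: "prob_space N" "sets N = sets XY_space"
    and tv: "(\<lambda>n. tv_dist (Ms n) N) \<longlonglongrightarrow> 0"
    and f: "f \<in> borel_measurable XY_space" "\<And>z. \<bar>f z\<bar> \<le> C"
  shows "(\<lambda>n. \<integral>z. f z \<partial>Ms n) \<longlonglongrightarrow> (\<integral>z. f z \<partial>N)"
  using tendsto_integral_diff_tv_dist[OF Ms N tv, of "\<lambda>_. f" C] f
  by (simp add: LIM_zero_iff)

subsection \<open>Marginals and regular conditional distributions\<close>

lemma sets_marginal: "sets (marginal M) = sets (count_space UNIV)"
  by (simp add: marginal_def)

lemma measurable_marginal: "measurable (marginal M) N = measurable (count_space UNIV) N"
  by (rule measurable_cong_sets) (simp_all add: sets_marginal)

lemma integral_marginal:
  fixes M :: "('a::countable \<times> 'b::polish_space) measure" and F :: "'a \<Rightarrow> real"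
  assumes "sets M = sets XY_space"
  shows "(\<integral>x. F x \<partial>marginal M) = (\<integral>z. F (fst z) \<partial>M)"
  unfolding marginal_def
  by (rule integral_distr) (simp_all add: measurable_cong_XY_space[OF assms] XY_space_def)

lemma prob_space_marginal:
  fixes M :: "('a::countable \<times> 'b::polish_space) measure"
  assumes "prob_space M" "sets M = sets XY_space"
  shows "prob_space (marginal M)"
  unfolding marginal_def
  by (rule prob_space.prob_space_distr[OF assms(1)])
    (simp add: measurable_cong_XY_space[OF assms(2)] XY_space_def)

lemma measure_marginal_singleton:
  fixes M :: "('a::countable \<times> 'b::polish_space) measure"
  assumes "sets M = sets XY_space"
  shows "measure (marginal M) {x} = measure M ({x} \<times> UNIV)"
proof -
  have "measure (marginal M) {x} = measure M (fst -` {x} \<inter> space M)"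
    unfolding marginal_def
    by (rule measure_distr) (simp_all add: measurable_cong_XY_space[OF assms] XY_space_def)
  also have "fst -` {x} \<inter> space M = {x} \<times> UNIV"
    using space_eq_UNIV_if_sets_XY_space[OF assms] by auto
  finally show ?thesis .
qed

lemma rcd_measure_slice:
  fixes M :: "('a::countable \<times> 'b::polish_space) measure"
  assumes "is_rcd M k" "B \<in> sets borel"
  shows "measure M ({x} \<times> B) = measure (marginal M) {x} * measure (k x) B"
proof -
  have "measure M ({x} \<times> B) = (\<integral>a. indicator {x} a * measure (k a) B \<partial>marginal M)"
    using assms by (auto simp: is_rcd_def)
  also have "\<dots> = (\<integral>a. indicator {x} a * measure (k x) B \<partial>marginal M)"
    by (intro Bochner_Integration.integral_cong) (auto simp: indicator_def)
  finally show ?thesis by (simp add: marginal_def)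
qed

lemma rcd_density_eq_distr_slice:
  fixes M :: "('a::countable \<times> 'b::polish_space) measure"
  assumes M: "prob_space M" "sets M = sets XY_space" and k: "is_rcd M k"
  shows "density (k x) (\<lambda>_. ennreal (measure (marginal M) {x}))
    = distr (density M (\<lambda>z. ennreal (indicator ({x} \<times> UNIV) z))) borel snd"
    (is "density (k x) (\<lambda>_. ennreal ?c) = distr ?D borel snd")
proof -
  interpret prob_space M by fact
  have kx: "prob_space (k x)" "sets (k x) = sets borel"
    using k by (auto simp: is_rcd_def prob_measures_def)
  have space_UNIV: "space ?D = UNIV" "space M = UNIV"
    using space_eq_UNIV_if_sets_XY_space[OF M(2)] by simp_all
  have "{x} \<times> UNIV \<in> sets M" using slice_in_sets_XY_space[of UNIV x] M(2) by simp
  then have indicator_measurable: "(\<lambda>z. ennreal (indicator ({x} \<times> UNIV) z)) \<in> borel_measurable M"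
    by simp
  show ?thesis
  proof (rule measure_eqI)
    fix B assume "B \<in> sets (density (k x) (\<lambda>_. ennreal ?c))"
    then have B: "B \<in> sets borel" using kx by simp
    have snd_B: "snd -` B \<inter> space ?D \<in> sets M"
      using measurable_sets[OF measurable_snd[of "count_space UNIV" borel] B]
      by (simp add: M(2) XY_space_def space_pair_measure space_UNIV)
    have "emeasure (distr ?D borel snd) B = emeasure ?D (snd -` B \<inter> space ?D)"
      using B by (intro emeasure_distr) (simp_all add: measurable_cong_XY_space[OF M(2)] XY_space_def)
    also have "\<dots> = (\<integral>\<^sup>+ z. ennreal (indicator ({x} \<times> UNIV) z) * indicator (snd -` B \<inter> space ?D) z \<partial>M)"
      using indicator_measurable snd_B by (rule emeasure_density)
    also have "\<dots> = (\<integral>\<^sup>+ z. indicator ({x} \<times> B) z \<partial>M)"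
      by (intro nn_integral_cong) (auto simp: indicator_def space_UNIV)
    also have "\<dots> = emeasure M ({x} \<times> B)"
      by (rule nn_integral_indicator) (use slice_in_sets_XY_space[OF B] M(2) in simp)
    also have "\<dots> = ennreal (?c * measure (k x) B)"
      by (simp add: emeasure_eq_measure rcd_measure_slice[OF k B])
    also have "\<dots> = emeasure (density (k x) (\<lambda>_. ennreal ?c)) B"
      using B kx measure_nonneg[of "marginal M" "{x}"]
      by (simp add: emeasure_density_const ennreal_mult
          finite_measure.emeasure_eq_measure[OF prob_space.finite_measure[OF kx(1)]])
    finally show "emeasure (density (k x) (\<lambda>_. ennreal ?c)) B = emeasure (distr ?D borel snd) B" ..
  qed (use kx in simp)
qed

lemma rcd_integral_slice:
  fixes M :: "('a::countable \<times> 'b::polish_space) measure" and h :: "'b \<Rightarrow> real"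
  assumes M: "prob_space M" "sets M = sets XY_space" and k: "is_rcd M k"
    and h: "h \<in> borel_measurable borel"
  shows "measure (marginal M) {x} * (\<integral>y. h y \<partial>k x)
    = (\<integral>z. indicator ({x} \<times> UNIV) z * h (snd z) \<partial>M)"
proof -
  define c where "c = measure (marginal M) {x}"
  have kx: "sets (k x) = sets borel" using k by (simp add: is_rcd_def prob_measures_def)
  have hk: "h \<in> borel_measurable (k x)" using h by (simp add: measurable_cong_sets[OF kx refl])
  have h_snd: "(\<lambda>z. h (snd z)) \<in> borel_measurable M"
    using h by (simp add: measurable_cong_XY_space[OF M(2)] XY_space_def)
  have "c * (\<integral>y. h y \<partial>k x) = (\<integral>y. h y \<partial>density (k x) (\<lambda>_. ennreal c))"
    using integral_density[OF hk, of "\<lambda>_. c"] by (simp add: c_def)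
  also have "\<dots> = (\<integral>y. h y \<partial>distr (density M (\<lambda>z. ennreal (indicator ({x} \<times> UNIV) z))) borel snd)"
    unfolding c_def rcd_density_eq_distr_slice[OF M k] ..
  also have "\<dots> = (\<integral>z. h (snd z) \<partial>density M (\<lambda>z. ennreal (indicator ({x} \<times> UNIV) z)))"
    by (rule integral_distr) (simp_all add: measurable_cong_XY_space[OF M(2)] XY_space_def h)
  also have "\<dots> = (\<integral>z. indicator ({x} \<times> UNIV) z *\<^sub>R h (snd z) \<partial>M)"
  proof (rule integral_density)
    have "{x} \<times> UNIV \<in> sets M" using slice_in_sets_XY_space[of UNIV x] M(2) by simp
    then show "indicator ({x} \<times> UNIV) \<in> borel_measurable M" by (rule borel_measurable_indicator)
  qed (use h_snd in simp_all)
  finally show ?thesis by (simp add: c_def)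
qed

lemma rcd_tendsto_integral_at_atom:
  fixes \<mu>s :: "nat \<Rightarrow> ('a::countable \<times> 'b::polish_space) measure" and h :: "'b \<Rightarrow> real"
  assumes Ms: "\<And>n. prob_space (\<mu>s n)" "\<And>n. sets (\<mu>s n) = sets XY_space"
    and M: "prob_space \<mu>" "sets \<mu> = sets XY_space"
    and tv: "(\<lambda>n. tv_dist (\<mu>s n) \<mu>) \<longlonglongrightarrow> 0"
    and ks: "\<And>n. is_rcd (\<mu>s n) (\<kappa>s n)" and k: "is_rcd \<mu> \<kappa>"
    and pos: "measure (marginal \<mu>) {x} > 0"
    and h: "h \<in> borel_measurable borel" "\<And>y. \<bar>h y\<bar> \<le> B"
  shows "(\<lambda>n. \<integral>y. h y \<partial>\<kappa>s n x) \<longlonglongrightarrow> (\<integral>y. h y \<partial>\<kappa> x)"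
proof -
  define f where "f z = indicator ({x} \<times> UNIV) z * h (snd z)" for z :: "'a \<times> 'b"
  define m where "m N = measure (marginal N) {x}" for N :: "('a \<times> 'b) measure"
  have slice: "{x} \<times> UNIV \<in> sets (XY_space :: ('a \<times> 'b) measure)"
    by (rule slice_in_sets_XY_space) simp
  have "f \<in> borel_measurable XY_space"
    unfolding f_def using slice h(1) by (simp add: XY_space_def)
  moreover have "\<bar>f z\<bar> \<le> \<bar>B\<bar>" for z using h(2)[of "snd z"] by (auto simp: f_def indicator_def)
  ultimately have f_conv: "(\<lambda>n. \<integral>z. f z \<partial>\<mu>s n) \<longlonglongrightarrow> (\<integral>z. f z \<partial>\<mu>)"
    by (rule tendsto_integral_tv_dist[OF Ms M tv])
  have "(\<lambda>n. \<integral>z. indicator ({x} \<times> UNIV) z \<partial>\<mu>s n) \<longlonglongrightarrow> (\<integral>z. indicator ({x} \<times> UNIV) z \<partial>\<mu> :: real)"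
    by (rule tendsto_integral_tv_dist[OF Ms M tv, where C=1]) (use slice in auto)
  moreover have "space (\<mu>s n) = UNIV" "space \<mu> = UNIV" for n
    using space_eq_UNIV_if_sets_XY_space Ms(2) M(2) by blast+
  ultimately have m_conv: "(\<lambda>n. m (\<mu>s n)) \<longlonglongrightarrow> m \<mu>"
    by (simp add: m_def measure_marginal_singleton Ms(2) M(2))
  have "(\<lambda>n. (\<integral>z. f z \<partial>\<mu>s n) / m (\<mu>s n)) \<longlonglongrightarrow> (\<integral>z. f z \<partial>\<mu>) / m \<mu>"
    using pos by (intro tendsto_divide f_conv m_conv) (simp add: m_def)
  moreover have "(\<integral>z. f z \<partial>\<mu>) / m \<mu> = (\<integral>y. h y \<partial>\<kappa> x)"
    using pos rcd_integral_slice[OF M k h(1)] by (simp add: f_def m_def field_simps)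
  moreover have "\<forall>\<^sub>F n in sequentially. (\<integral>z. f z \<partial>\<mu>s n) / m (\<mu>s n) = (\<integral>y. h y \<partial>\<kappa>s n x)"
    using order_tendstoD(1)[OF m_conv pos[folded m_def]]
  proof eventually_elim
    case (elim n)
    then show ?case using rcd_integral_slice[OF Ms(1,2) ks h(1)] by (simp add: f_def m_def field_simps)
  qed
  ultimately show ?thesis by (simp add: tendsto_cong)
qed

subsection \<open>The weak topology and the space \<open>X \<times> P(Y)\<close>\<close>

lemma space_borel_of: "space (borel_of T) = topspace T"
  unfolding borel_of_def by (rule space_measure_of_conv)

lemma sets_borel_of: "sets (borel_of T) = sigma_sets (topspace T) {U. openin T U}"
  unfolding borel_of_def by (rule sets_measure_of) (auto dest: openin_subset)

lemma continuous_map_borel_measurable: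
  assumes "continuous_map T euclideanreal g"
  shows "g \<in> borel_measurable (borel_of T)"
proof (rule borel_measurableI)
  fix S :: "real set" assume "open S"
  then have "openin T {x \<in> topspace T. g x \<in> S}"
    using openin_continuous_map_preimage[OF assms] by simp
  moreover have "g -` S \<inter> space (borel_of T) = {x \<in> topspace T. g x \<in> S}"
    by (auto simp: space_borel_of)
  ultimately show "g -` S \<inter> space (borel_of T) \<in> sets (borel_of T)"
    by (simp add: sets_borel_of sigma_sets.Basic)
qed

lemma topspace_weak_topology:
  "topspace (weak_topology :: 'b::topological_space measure topology) = prob_measures"
proof -
  have "\<Union>{{M \<in> prob_measures. (\<integral>y. g y \<partial>M) \<in> U} | g U.
          continuous_on UNIV g \<and> bounded (range g) \<and> open (U :: real set)}
        \<subseteq> (prob_measures :: 'b measure set)"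
    by (rule Union_least) auto
  then show ?thesis unfolding weak_topology_def topology_generated_by_topspace Union_insert
    by (rule Un_absorb2)
qed

lemma topspace_XP_topology:
  "topspace (XP_topology :: ('a \<times> 'b::topological_space measure) topology) = UNIV \<times> prob_measures"
  unfolding XP_topology_def by (simp add: topspace_weak_topology)

lemma limitin_weak_topologyI:
  fixes a :: "nat \<Rightarrow> 'b::topological_space measure"
  assumes a: "\<And>n. a n \<in> prob_measures" and l: "l \<in> prob_measures"
    and conv: "\<And>g :: 'b \<Rightarrow> real. continuous_on UNIV g \<Longrightarrow> bounded (range g) \<Longrightarrow>
        (\<lambda>n. \<integral>y. g y \<partial>a n) \<longlonglongrightarrow> (\<integral>y. g y \<partial>l)"
  shows "limitin weak_topology a l sequentially"
proof -
  define S :: "'b measure set set" where "S = insert prob_measures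
       {{M \<in> prob_measures. (\<integral>y. g y \<partial>M) \<in> U} | g U.
          continuous_on UNIV g \<and> bounded (range g) \<and> open (U :: real set)}"
  have "l \<in> U \<longrightarrow> (\<forall>\<^sub>F n in sequentially. a n \<in> U)" if "generate_topology_on S U" for U
    using that
  proof (induction rule: generate_topology_on.induct)
    case (Int A B)
    show ?case
    proof
      assume "l \<in> A \<inter> B"
      with Int.IH have "\<forall>\<^sub>F n in sequentially. a n \<in> A" "\<forall>\<^sub>F n in sequentially. a n \<in> B"
        by blast+
      then show "\<forall>\<^sub>F n in sequentially. a n \<in> A \<inter> B" by eventually_elim blast
    qed
  next
    case (UN K)
    show ?case
    proof
      assume "l \<in> \<Union>K"
      then obtain A where "A \<in> K" "l \<in> A" by blast
      with UN.IH have "\<forall>\<^sub>F n in sequentially. a n \<in> A" by blast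
      then show "\<forall>\<^sub>F n in sequentially. a n \<in> \<Union>K"
        by eventually_elim (use \<open>A \<in> K\<close> in blast)
    qed
  next
    case (Basis s)
    then have "s = prob_measures \<or> (\<exists>g U. s = {M \<in> prob_measures. (\<integral>y. g y \<partial>M) \<in> U} \<and>
        continuous_on UNIV g \<and> bounded (range g) \<and> open (U :: real set))"
      unfolding S_def insert_iff mem_Collect_eq .
    then show ?case
    proof (elim disjE exE conjE)
      fix g :: "'b \<Rightarrow> real" and U :: "real set"
      assume s: "s = {M \<in> prob_measures. (\<integral>y. g y \<partial>M) \<in> U}"
        and g: "continuous_on UNIV g" "bounded (range g)" and U: "open U"
      show ?thesis
      proof
        assume "l \<in> s"
        then have "(\<integral>y. g y \<partial>l) \<in> U" unfolding s by blast
        from topological_tendstoD[OF conv[OF g] U this]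
        show "\<forall>\<^sub>F n in sequentially. a n \<in> s"
          by eventually_elim (use a in \<open>simp add: s\<close>)
      qed
    qed (use a in simp)
  qed simp
  moreover have "generate_topology_on S U" if "openin weak_topology U" for U
    using that unfolding weak_topology_def S_def[symmetric] openin_topology_generated_by_iff .
  ultimately show ?thesis
    unfolding limitin_def using l by (simp add: topspace_weak_topology)
qed

lemma integral_psi:
  fixes M :: "('a::countable \<times> 'b::polish_space) measure"
  assumes k: "\<And>x. k x \<in> prob_measures" and g: "continuous_map XP_topology euclideanreal g"
  shows "(\<integral>z. g z \<partial>psi M k) = (\<integral>x. g (x, k x) \<partial>marginal M)"
proof -
  have "(\<lambda>x. (x, k x)) \<in> measurable (count_space UNIV) (borel_of XP_topology)"
    using k by (simp add: space_borel_of topspace_XP_topology)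
  then have "(\<lambda>x. (x, k x)) \<in> measurable (marginal M) (borel_of XP_topology)"
    unfolding measurable_marginal .
  then show ?thesis
    unfolding psi_def using continuous_map_borel_measurable[OF g] by (rule integral_distr)
qed

subsection \<open>Convergence of the conditional distributions\<close>

lemma rcd_limitin_at_atom:
  fixes \<mu>s :: "nat \<Rightarrow> ('a::countable \<times> 'b::polish_space) measure"
  assumes Ms: "\<And>n. prob_space (\<mu>s n)" "\<And>n. sets (\<mu>s n) = sets XY_space"
    and M: "prob_space \<mu>" "sets \<mu> = sets XY_space"
    and tv: "(\<lambda>n. tv_dist (\<mu>s n) \<mu>) \<longlonglongrightarrow> 0"
    and ks: "\<And>n. is_rcd (\<mu>s n) (\<kappa>s n)" and k: "is_rcd \<mu> \<kappa>"
    and pos: "measure (marginal \<mu>) {x} > 0"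
  shows "limitin weak_topology (\<lambda>n. \<kappa>s n x) (\<kappa> x) sequentially"
proof (rule limitin_weak_topologyI)
  show "\<kappa>s n x \<in> prob_measures" "\<kappa> x \<in> prob_measures" for n
    using ks k by (auto simp: is_rcd_def)
  fix h :: "'b \<Rightarrow> real" assume "continuous_on UNIV h" "bounded (range h)"
  then obtain B where "\<And>y. \<bar>h y\<bar> \<le> B" "h \<in> borel_measurable borel"
    by (auto simp: bounded_iff intro: borel_measurable_continuous_onI)
  then show "(\<lambda>n. \<integral>y. h y \<partial>\<kappa>s n x) \<longlonglongrightarrow> (\<integral>y. h y \<partial>\<kappa> x)"
    by (intro rcd_tendsto_integral_at_atom[OF Ms M tv ks k pos]) auto
qed

lemma tendsto_integral_marginal_rcd:
  fixes \<mu>s :: "nat \<Rightarrow> ('a::countable \<times> 'b::polish_space) measure"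
  assumes Ms: "\<And>n. prob_space (\<mu>s n)" "\<And>n. sets (\<mu>s n) = sets XY_space"
    and M: "prob_space \<mu>" "sets \<mu> = sets XY_space"
    and tv: "(\<lambda>n. tv_dist (\<mu>s n) \<mu>) \<longlonglongrightarrow> 0"
    and ks: "\<And>n. is_rcd (\<mu>s n) (\<kappa>s n)" and k: "is_rcd \<mu> \<kappa>"
    and g: "continuous_map XP_topology euclideanreal g"
    and B: "\<And>p. p \<in> topspace XP_topology \<Longrightarrow> \<bar>g p\<bar> \<le> B"
  shows "(\<lambda>n. \<integral>x. g (x, \<kappa>s n x) \<partial>marginal \<mu>) \<longlonglongrightarrow> (\<integral>x. g (x, \<kappa> x) \<partial>marginal \<mu>)"
proof (rule integral_dominated_convergence[where w="\<lambda>_. B"])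
  interpret prob_space "marginal \<mu>" by (rule prob_space_marginal[OF M])
  show "(\<lambda>x. g (x, \<kappa>s n x)) \<in> borel_measurable (marginal \<mu>)"
    "(\<lambda>x. g (x, \<kappa> x)) \<in> borel_measurable (marginal \<mu>)" for n
    by (simp_all add: measurable_marginal)
  show "integrable (marginal \<mu>) (\<lambda>_. B)" by simp
  show "AE x in marginal \<mu>. norm (g (x, \<kappa>s n x)) \<le> B" for n
    using B ks by (simp add: topspace_XP_topology is_rcd_def)
  have "AE x in marginal \<mu>. x \<notin> {x. measure (marginal \<mu>) {x} = 0}"
    by (rule AE_discrete_difference) (auto simp: emeasure_eq_measure sets_marginal)
  then show "AE x in marginal \<mu>. (\<lambda>n. g (x, \<kappa>s n x)) \<longlonglongrightarrow> g (x, \<kappa> x)"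
  proof eventually_elim
    case (elim x)
    then have "measure (marginal \<mu>) {x} > 0"
      using measure_nonneg[of "marginal \<mu>" "{x}"] by (simp add: less_le)
    then have "limitin weak_topology (\<lambda>n. \<kappa>s n x) (\<kappa> x) sequentially"
      by (rule rcd_limitin_at_atom[OF Ms M tv ks k])
    then have "limitin XP_topology (\<lambda>n. (x, \<kappa>s n x)) (x, \<kappa> x) sequentially"
      unfolding XP_topology_def limitin_pairwise by (simp add: o_def)
    then show ?case using continuous_map_limit[OF g] by (simp add: o_def)
  qed
qed

theorem corollary6:
  fixes \<mu>s :: "nat \<Rightarrow> ('a::countable \<times> 'b::polish_space) measure"
    and \<mu> :: "('a \<times> 'b) measure"
    and \<kappa>s :: "nat \<Rightarrow> 'a \<Rightarrow> 'b measure"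
    and \<kappa> :: "'a \<Rightarrow> 'b measure"
  assumes "\<And>n. prob_space (\<mu>s n)" "\<And>n. sets (\<mu>s n) = sets XY_space"
    and "prob_space \<mu>" "sets \<mu> = sets XY_space"
    and "(\<lambda>n. tv_dist (\<mu>s n) \<mu>) \<longlonglongrightarrow> 0"
    and "\<And>n. is_rcd (\<mu>s n) (\<kappa>s n)" "is_rcd \<mu> \<kappa>"
  shows "weak_conv XP_topology (\<lambda>n. psi (\<mu>s n) (\<kappa>s n)) (psi \<mu> \<kappa>)"
  unfolding weak_conv_def
proof (intro allI impI, elim conjE)
  note Ms = assms(1,2) and M = assms(3,4) and tv = assms(5) and ks = assms(6) and k = assms(7)
  fix g :: "'a \<times> 'b measure \<Rightarrow> real"
  assume g: "continuous_map XP_topology euclideanreal g" "bounded (g ` topspace XP_topology)"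
  then obtain B where B: "\<And>p. p \<in> topspace XP_topology \<Longrightarrow> \<bar>g p\<bar> \<le> B"
    unfolding bounded_iff by auto
  have kp: "\<kappa>s n x \<in> prob_measures" "\<kappa> x \<in> prob_measures" for n x
    using ks k by (auto simp: is_rcd_def)
  have "(\<lambda>n. (\<integral>z. g (fst z, \<kappa>s n (fst z)) \<partial>\<mu>s n) - (\<integral>z. g (fst z, \<kappa>s n (fst z)) \<partial>\<mu>)) \<longlonglongrightarrow> 0"
    using B kp by (intro tendsto_integral_diff_tv_dist[OF Ms M tv])
      (auto simp: XY_space_def topspace_XP_topology)
  then have "(\<lambda>n. (\<integral>x. g (x, \<kappa>s n x) \<partial>marginal (\<mu>s n)) - (\<integral>x. g (x, \<kappa>s n x) \<partial>marginal \<mu>)) \<longlonglongrightarrow> 0"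
    by (simp add: integral_marginal Ms(2) M(2))
  from tendsto_add[OF this tendsto_integral_marginal_rcd[OF Ms M tv ks k g(1) B]]
  show "(\<lambda>n. \<integral>z. g z \<partial>psi (\<mu>s n) (\<kappa>s n)) \<longlonglongrightarrow> (\<integral>z. g z \<partial>psi \<mu> \<kappa>)"
    by (simp add: integral_psi[OF _ g(1)] kp)
qed

end
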